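(* Suppose $c, \Delta, t\in\mathbb{N}^+$ and $\Delta< t$. Let $V\subseteq [t]^c$. If there exists a function $\theta: V\to [c]$ such that for all $i\in [c]$ we have \[ \Big|\big\{\mathbf{v}(i)\mid \text{$\mathbf{v}\in V$ and $\theta(\mathbf{v})= i$}\big\}\Big| \le t- \Delta, \] then $|V|\le t^c- \Delta^c$.
   Context: For $n\in\mathbb N$, $[n]:=\{1,\ldots,n\}$, and $\mathbb N^+$ denotes the positive integers. For a tuple $\mathbf{v}\in[t]^c$ and $i\in[c]$, $\mathbf{v}(i)$ denotes the $i$-th coordinate of $\mathbf{v}$. *)

theory Defs
  imports Main "HOL-Library.FuncSet"
begin

text \<open>The cube [t]^c: tuples v indexed by {1..c} with entries in {1..t},
  represented as extensional functions nat => nat (undefined outside {1..c}).\<close>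
definition cube :: "nat \<Rightarrow> nat \<Rightarrow> (nat \<Rightarrow> nat) set" where
  "cube t c = PiE {1..c} (\<lambda>_. {1..t})"

end

theory Submission
  imports Defs
begin

text \<open>Each coordinate \<open>i\<close> has at least \<open>\<Delta>\<close> values in \<open>[t]\<close> that no vector \<open>v\<close> with
  \<open>\<theta> v = i\<close> takes there. The box of tuples built from these missing values has at least
  \<open>\<Delta>^c\<close> elements, and it avoids \<open>V\<close>: a vector \<open>v \<in> V\<close> already fails at coordinate
  \<open>\<theta> v\<close>. Hence \<open>V\<close> lies in the complement of the box inside \<open>[t]^c\<close>.\<close>

lemma finite_cube: "finite (cube t c)"
  unfolding cube_def by (simp add: finite_PiE)

lemma card_cube: "card (cube t c) = t ^ c"
  unfolding cube_def by (simp add: card_PiE)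

lemma PiE_avoiding_disjoint:
  assumes "\<forall>v\<in>V. \<theta> v \<in> I \<and> v (\<theta> v) \<in> S (\<theta> v)"
  shows "V \<inter> PiE I (\<lambda>i. A i - S i) = {}"
  using assms by (fastforce simp: PiE_def Pi_def)

lemma card_PiE_lower_bound:
  assumes "finite I" and "\<And>i. i \<in> I \<Longrightarrow> k \<le> card (B i)"
  shows "k ^ card I \<le> card (PiE I B)"
proof -
  have "k ^ card I = (\<Prod>i\<in>I. k)" by simp
  also have "\<dots> \<le> (\<Prod>i\<in>I. card (B i))" by (rule prod_mono) (use assms(2) in auto)
  also have "\<dots> = card (PiE I B)" by (simp add: card_PiE assms(1))
  finally show ?thesis .
qed

lemma card_le_card_minus_avoided:
  assumes "finite U" and "V \<subseteq> U" and "B \<subseteq> U" and "V \<inter> B = {}"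
  shows "card V \<le> card U - card B"
proof -
  have "card V \<le> card (U - B)" using assms by (intro card_mono) auto
  also have "\<dots> = card U - card B"
    using assms by (simp add: card_Diff_subset finite_subset)
  finally show ?thesis .
qed

theorem lemma4p5:
  fixes c \<Delta> t :: nat and V :: "(nat \<Rightarrow> nat) set"
  assumes "c > 0" and "\<Delta> > 0" and "t > 0" and "\<Delta> < t"
    and "V \<subseteq> cube t c"
    and "\<exists>\<theta>. (\<forall>v\<in>V. \<theta> v \<in> {1..c}) \<and>
          (\<forall>i\<in>{1..c}. card {v i | v. v \<in> V \<and> \<theta> v = i} \<le> t - \<Delta>)"
  shows "card V \<le> t ^ c - \<Delta> ^ c"
proof -
  obtain \<theta> where \<theta>: "\<forall>v\<in>V. \<theta> v \<in> {1..c}"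
    and small: "\<forall>i\<in>{1..c}. card {v i | v. v \<in> V \<and> \<theta> v = i} \<le> t - \<Delta>"
    using assms(6) by blast
  define S where "S i = {v i | v. v \<in> V \<and> \<theta> v = i}" for i
  define B where "B = PiE {1..c} (\<lambda>i. {1..t} - S i)"
  have "\<Delta> \<le> card ({1..t} - S i)" if i: "i \<in> {1..c}" for i
  proof -
    have "S i \<subseteq> {1..t}"
      using assms(5) i unfolding S_def cube_def by (auto simp: PiE_def Pi_def)
    then have "card ({1..t} - S i) = t - card (S i)"
      by (simp add: card_Diff_subset finite_subset)
    moreover have "card (S i) \<le> t - \<Delta>" using small i unfolding S_def by blast
    ultimately show ?thesis using assms(4) by linarith
  qed
  then have "\<Delta> ^ c \<le> card B"
    using card_PiE_lower_bound[of "{1..c}" \<Delta> "\<lambda>i. {1..t} - S i"] unfolding B_def by simp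
  moreover have "V \<inter> B = {}"
  proof -
    have "\<forall>v\<in>V. \<theta> v \<in> {1..c} \<and> v (\<theta> v) \<in> S (\<theta> v)"
      using \<theta> unfolding S_def by blast
    then show ?thesis unfolding B_def by (rule PiE_avoiding_disjoint)
  qed
  moreover have "B \<subseteq> cube t c"
    unfolding B_def cube_def by (rule PiE_mono) auto
  ultimately have "card V \<le> t ^ c - card B"
    using card_le_card_minus_avoided[OF finite_cube assms(5)] by (simp add: card_cube)
  with \<open>\<Delta> ^ c \<le> card B\<close> show ?thesis by linarith
qed

end
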